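(* A class $\mathcal{C}$ of graphs has tree rank at most $2$ if and only if it has locally almost bounded degree.
   Context: $T_{d,m}$ is the rooted tree of depth $d$ (all leaf-to-root paths have $d$ edges) in which every non-leaf vertex has exactly $m$ children. $H$ is an $r$-shallow topological minor of $G$ if $G$ has a subgraph isomorphic to a graph obtained from $H$ by replacing each edge by a path with at most $r$ internal vertices (paths internally disjoint). A class has tree rank at most $d$ if for every $r\in\mathbb{N}$ there is $m\in\mathbb{N}$ such that no graph of the class contains $T_{d,m}$ as an $r$-shallow topological minor. $N_r^G(v)$ is the closed $r$-neighborhood of $v$ (vertices at distance at most $r$ from $v$, including $v$). A class $\mathcal{C}$ has locally almost bounded degree if there exist functions $f,d:\mathbb{N}\to\mathbb{N}$ such that for every $r\in\mathbb{N}$, every $G\in\mathcal{C}$ and every $v\in V(G)$, the set $N_r^G(v)$ contains at most $f(r)$ vertices whose degree in $G$ is larger than $d(r)$. *)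

theory Defs
  imports Main
begin

type_synonym 'a graph = "'a set \<times> 'a set set"

definition verts :: "'a graph \<Rightarrow> 'a set" where "verts G = fst G"
definition edges :: "'a graph \<Rightarrow> 'a set set" where "edges G = snd G"

definition graph :: "'a graph \<Rightarrow> bool" where
  "graph G \<longleftrightarrow> finite (verts G) \<and> (\<forall>e\<in>edges G. e \<subseteq> verts G \<and> card e = 2)"

definition adj :: "'a graph \<Rightarrow> 'a \<Rightarrow> 'a \<Rightarrow> bool" where
  "adj G u v \<longleftrightarrow> {u, v} \<in> edges G"

definition degree :: "'a graph \<Rightarrow> 'a \<Rightarrow> nat" where
  "degree G v = card {e \<in> edges G. v \<in> e}"

definition walk :: "'a graph \<Rightarrow> 'a list \<Rightarrow> bool" where
  "walk G ws \<longleftrightarrow> ws \<noteq> [] \<and> set ws \<subseteq> verts G \<and>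
     (\<forall>i. Suc i < length ws \<longrightarrow> adj G (ws ! i) (ws ! Suc i))"

text \<open>Closed r-neighbourhood: vertices at distance at most r (including v).\<close>
definition nbhd :: "nat \<Rightarrow> 'a graph \<Rightarrow> 'a \<Rightarrow> 'a set" where
  "nbhd r G v = {u. \<exists>ws. walk G ws \<and> hd ws = v \<and> last ws = u \<and> length ws \<le> r + 1}"

definition gpath :: "'a graph \<Rightarrow> 'a list \<Rightarrow> bool" where
  "gpath G ps \<longleftrightarrow> walk G ps \<and> distinct ps"

definition internal :: "'a list \<Rightarrow> 'a set" where
  "internal ps = set (butlast (tl ps))"

text \<open>H is an r-shallow topological minor of G: a subdivision of H, in which every edge
is replaced by a path with at most r internal vertices (paths internally disjoint,
internal vertices distinct from branch vertices), is a subgraph of G.\<close>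
definition shallow_top_minor :: "nat \<Rightarrow> 'b graph \<Rightarrow> 'a graph \<Rightarrow> bool" where
  "shallow_top_minor r H G \<longleftrightarrow>
     (\<exists>(f :: 'b \<Rightarrow> 'a) (P :: 'b set \<Rightarrow> 'a list).
        inj_on f (verts H) \<and> f ` verts H \<subseteq> verts G \<and>
        (\<forall>e\<in>edges H. gpath G (P e) \<and> length (P e) \<ge> 2 \<and> length (P e) \<le> r + 2 \<and>
                      {hd (P e), last (P e)} = f ` e \<and>
                      internal (P e) \<inter> f ` verts H = {}) \<and>
        (\<forall>e\<in>edges H. \<forall>e'\<in>edges H. e \<noteq> e' \<longrightarrow> internal (P e) \<inter> internal (P e') = {}))"

text \<open>The tree T_{d,m}: vertices are sequences over {0..<m} of length at most d
(root = []), each non-leaf xs has the m children xs @ [i].\<close>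
definition T :: "nat \<Rightarrow> nat \<Rightarrow> nat list graph" where
  "T d m = ({xs. length xs \<le> d \<and> set xs \<subseteq> {..<m}},
            {{xs, xs @ [i]} | xs i. length xs < d \<and> set xs \<subseteq> {..<m} \<and> i < m})"

definition tree_rank_le :: "nat \<Rightarrow> 'a graph set \<Rightarrow> bool" where
  "tree_rank_le d C \<longleftrightarrow> (\<forall>r. \<exists>m. \<forall>G\<in>C. \<not> shallow_top_minor r (T d m) G)"

definition locally_almost_bounded_degree :: "'a graph set \<Rightarrow> bool" where
  "locally_almost_bounded_degree C \<longleftrightarrow>
     (\<exists>f d :: nat \<Rightarrow> nat. \<forall>r. \<forall>G\<in>C. \<forall>v\<in>verts G.
        card {u \<in> nbhd r G v. degree G u > d r} \<le> f r)"

end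

(*
  The ball of radius r + 1 around the image of the root of an r-shallow subdivision of T_{2,m}
  contains the images of the m children of the root, each of degree at least m. So if every
  such ball has at most f vertices of degree greater than d, then T_{2,f+d+1} is not an
  r-shallow topological minor.

  Conversely, let T_{2,M} not be an r-shallow topological minor of G, fix a breadth-first search
  tree of N_r(v), and call a vertex heavy if its degree exceeds M (M + r + 1). If some node w had
  M children whose subtrees contain heavy vertices s_1, ..., s_M, the tree paths from the s_i up
  to w would be legs with at most r + 1 vertices meeting only in w. They occupy at most M (r + 1)
  vertices, so each s_i keeps M^2 neighbours off the legs, and M new leaves below each s_i can be
  chosen greedily: an r-shallow subdivision of T_{2,M}. Hence every node has fewer than M such
  children, and counting level by level leaves at most (M + 1)^r heavy vertices in N_r(v).
*)

theory Submission
  imports Defs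
begin

section \<open>Graphs, walks and balls\<close>

lemma finite_edges: "graph G \<Longrightarrow> finite (edges G)"
  unfolding graph_def by (metis Pow_iff finite_Pow_iff finite_subset subsetI)

lemma adj_commute: "adj G u v \<longleftrightarrow> adj G v u"
  unfolding adj_def by (simp add: insert_commute)

lemma adj_in_verts:
  assumes "graph G" "adj G u v"
  shows "u \<in> verts G" "v \<in> verts G" "u \<noteq> v"
proof -
  have "{u, v} \<subseteq> verts G" "card {u, v} = 2" using assms unfolding graph_def adj_def by auto
  then show "u \<in> verts G" "v \<in> verts G" "u \<noteq> v" by (auto simp: card_2_iff)
qed

lemma degree_eq_card_adj:
  assumes "graph G"
  shows "degree G x = card {y. adj G x y}"
proof -
  have "bij_betw (\<lambda>y. {x, y}) {y. adj G x y} {e \<in> edges G. x \<in> e}"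
  proof (rule bij_betwI')
    show "{x, y} \<in> {e \<in> edges G. x \<in> e}" if "y \<in> {y. adj G x y}" for y
      using that unfolding adj_def by simp
    show "\<exists>y\<in>{y. adj G x y}. e = {x, y}" if e: "e \<in> {e \<in> edges G. x \<in> e}" for e
    proof -
      obtain a b where "e = {a, b}" using e assms unfolding graph_def by (auto simp: card_2_iff)
      then have "e = {x, if a = x then b else a}" using e by auto
      then show ?thesis using e unfolding adj_def by auto
    qed
  qed (auto simp: doubleton_eq_iff)
  then show ?thesis unfolding degree_def by (simp add: bij_betw_same_card)
qed

lemma finite_adj: "graph G \<Longrightarrow> finite {y. adj G x y}"
  using adj_in_verts(2) unfolding graph_def by (metis (no_types, lifting) finite_subset mem_Collect_eq subsetI)

lemma walk_rev: "walk G ws \<Longrightarrow> walk G (rev ws)"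
  unfolding walk_def
proof (intro conjI allI impI)
  fix i
  assume w: "ws \<noteq> [] \<and> set ws \<subseteq> verts G \<and> (\<forall>i. Suc i < length ws \<longrightarrow> adj G (ws ! i) (ws ! Suc i))"
    and i: "Suc i < length (rev ws)"
  define k where "k = length ws - Suc (Suc i)"
  have "Suc k < length ws" "rev ws ! i = ws ! Suc k" "rev ws ! Suc i = ws ! k"
    using i unfolding k_def by (auto simp: rev_nth Suc_diff_Suc)
  then show "adj G (rev ws ! i) (rev ws ! Suc i)" using w adj_commute by metis
qed auto

lemma gpath_rev: "gpath G ps \<Longrightarrow> gpath G (rev ps)"
  unfolding gpath_def by (simp add: walk_rev)

lemma walk_snoc:
  assumes "walk G ws" "adj G (last ws) u" "u \<in> verts G"
  shows "walk G (ws @ [u])"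
proof -
  have "adj G ((ws @ [u]) ! i) ((ws @ [u]) ! Suc i)" if "Suc i < Suc (length ws)" for i
  proof (cases "Suc i < length ws")
    case False
    then have "i = length ws - 1" "ws \<noteq> []" using that assms(1) unfolding walk_def by auto
    then show ?thesis using assms(2) by (simp add: nth_append last_conv_nth)
  qed (use assms(1) in \<open>auto simp: walk_def nth_append\<close>)
  then show ?thesis using assms unfolding walk_def by auto
qed

lemma walk_butlast:
  assumes "walk G ws" "2 \<le> length ws"
  shows "walk G (butlast ws)" "adj G (last (butlast ws)) (last ws)"
proof -
  have ne: "butlast ws \<noteq> []" "ws \<noteq> []" using assms(2) by (auto simp flip: length_greater_0_conv)
  show "walk G (butlast ws)"
    using assms(1) ne unfolding walk_def by (auto simp: nth_butlast dest: in_set_butlastD)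
  have "adj G (ws ! (length ws - 2)) (ws ! Suc (length ws - 2))"
    using assms unfolding walk_def by simp
  moreover have "Suc (length ws - 2) = length ws - 1" using assms(2) by simp
  moreover have "last (butlast ws) = ws ! (length ws - 2)" "last ws = ws ! (length ws - 1)"
    using assms(2) ne by (auto simp: last_conv_nth nth_butlast numeral_2_eq_2)
  ultimately show "adj G (last (butlast ws)) (last ws)" by simp
qed

lemma internal_eq:
  assumes "distinct xs" "2 \<le> length xs"
  shows "internal xs = set xs - {hd xs, last xs}"
proof -
  obtain a ys b where "xs = a # ys @ [b]"
    using assms by (metis One_nat_def Suc_1 Suc_le_length_iff append_butlast_last_id list.distinct(1))
  then show ?thesis using assms unfolding internal_def by auto
qed

lemma distinct_hd_neq_last:
  assumes "distinct xs" "2 \<le> length xs"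
  shows "hd xs \<noteq> last xs"
proof (cases xs rule: rev_cases)
  case (snoc ys b)
  then have "ys \<noteq> []" using assms(2) by auto
  then show ?thesis using assms(1) snoc hd_in_set[of ys] by auto
qed (use assms in simp)

lemma gpath_neighbour_of_end:
  assumes "gpath G p" "2 \<le> length p" "a \<in> {hd p, last p}"
  shows "\<exists>b \<in> set p - {a}. adj G a b"
proof -
  have "\<exists>b \<in> set q - {hd q}. adj G (hd q) b" if "gpath G q" "2 \<le> length q" for q
  proof -
    have "adj G (q ! 0) (q ! 1)" "q ! 1 \<noteq> q ! 0"
      using that unfolding gpath_def walk_def by (auto simp: nth_eq_iff_index_eq)
    moreover have "q ! 1 \<in> set q" "hd q = q ! 0"
      using that by (auto intro: hd_conv_nth)
    ultimately show ?thesis by auto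
  qed
  from this[of p] this[of "rev p"] show ?thesis
    using assms gpath_rev[OF assms(1)] by (auto simp: hd_rev)
qed

lemma nbhd_subset_verts: "nbhd n G v \<subseteq> verts G"
  unfolding nbhd_def walk_def by auto

lemma finite_nbhd: "graph G \<Longrightarrow> finite (nbhd n G v)"
  using nbhd_subset_verts finite_subset unfolding graph_def by metis

lemma nbhd_mono: "n \<le> n' \<Longrightarrow> nbhd n G v \<subseteq> nbhd n' G v"
  unfolding nbhd_def by auto

lemma center_in_nbhd: "v \<in> verts G \<Longrightarrow> v \<in> nbhd n G v"
  unfolding nbhd_def walk_def by (auto intro!: exI[of _ "[v]"])

lemma nbhd_0: "nbhd 0 G v \<subseteq> {v}"
  unfolding nbhd_def walk_def by (auto simp: le_Suc_eq length_Suc_conv)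

lemma nbhd_Suc_adj:
  assumes "graph G" "p \<in> nbhd n G v" "adj G p u"
  shows "u \<in> nbhd (Suc n) G v"
proof -
  obtain ws where ws: "walk G ws" "hd ws = v" "last ws = p" "length ws \<le> Suc n"
    using assms(2) unfolding nbhd_def by auto
  then have "walk G (ws @ [u])" using walk_snoc adj_in_verts(2) assms(1,3) by metis
  moreover have "hd (ws @ [u]) = v" using ws unfolding walk_def by simp
  ultimately show ?thesis using ws(4) unfolding nbhd_def by (auto intro!: exI[of _ "ws @ [u]"])
qed

lemma nbhd_SucE:
  assumes "u \<in> nbhd (Suc n) G v" "u \<notin> nbhd n G v"
  obtains p where "p \<in> nbhd n G v" "adj G p u"
proof -
  obtain ws where ws: "walk G ws" "hd ws = v" "last ws = u" "length ws \<le> Suc (Suc n)"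
    using assms(1) unfolding nbhd_def by auto
  with assms(2) have len: "length ws = Suc (Suc n)" unfolding nbhd_def by fastforce
  then have "walk G (butlast ws)" "adj G (last (butlast ws)) u"
    using walk_butlast[OF ws(1)] ws(3) by auto
  moreover have "hd (butlast ws) = v" using ws(2) len by (cases ws) auto
  ultimately have "last (butlast ws) \<in> nbhd n G v" using len unfolding nbhd_def by auto
  then show thesis using that \<open>adj G (last (butlast ws)) u\<close> by blast
qed

lemma walk_in_nbhd:
  assumes "walk G p" "length p \<le> Suc n" "{hd p, last p} = {a, b}"
  shows "b \<in> nbhd n G a"
proof (cases "hd p = a \<and> last p = b")
  case True
  then show ?thesis using assms unfolding nbhd_def by auto
next
  case False
  then have "hd (rev p) = a" "last (rev p) = b"
    using assms(1,3) unfolding walk_def by (auto simp: doubleton_eq_iff hd_rev last_rev)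
  then show ?thesis using assms walk_rev unfolding nbhd_def by fastforce
qed

section \<open>Shallow subdivisions\<close>

definition shallow_subdivision ::
    "nat \<Rightarrow> 'b graph \<Rightarrow> 'a graph \<Rightarrow> ('b \<Rightarrow> 'a) \<Rightarrow> ('b set \<Rightarrow> 'a list) \<Rightarrow> bool" where
  "shallow_subdivision r H G f P \<longleftrightarrow>
     inj_on f (verts H) \<and> f ` verts H \<subseteq> verts G \<and>
     (\<forall>e\<in>edges H. gpath G (P e) \<and> 2 \<le> length (P e) \<and> length (P e) \<le> r + 2 \<and>
                   {hd (P e), last (P e)} = f ` e \<and> internal (P e) \<inter> f ` verts H = {}) \<and>
     (\<forall>e\<in>edges H. \<forall>e'\<in>edges H. e \<noteq> e' \<longrightarrow> internal (P e) \<inter> internal (P e') = {})"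

lemma shallow_top_minor_iff: "shallow_top_minor r H G \<longleftrightarrow> (\<exists>f P. shallow_subdivision r H G f P)"
  unfolding shallow_top_minor_def shallow_subdivision_def by simp

lemma shallow_subdivisionD:
  assumes "shallow_subdivision r H G f P"
  shows "inj_on f (verts H)" "f ` verts H \<subseteq> verts G"
    and "e \<in> edges H \<Longrightarrow> gpath G (P e)" "e \<in> edges H \<Longrightarrow> 2 \<le> length (P e)"
    and "e \<in> edges H \<Longrightarrow> length (P e) \<le> r + 2"
    and "e \<in> edges H \<Longrightarrow> {hd (P e), last (P e)} = f ` e"
    and "e \<in> edges H \<Longrightarrow> internal (P e) \<inter> f ` verts H = {}"
    and "e \<in> edges H \<Longrightarrow> e' \<in> edges H \<Longrightarrow> e \<noteq> e' \<Longrightarrow> internal (P e) \<inter> internal (P e') = {}"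
  using assms unfolding shallow_subdivision_def by blast+

lemma shallow_subdivision_nbhd:
  assumes "shallow_subdivision r H G f P" "{x, y} \<in> edges H"
  shows "f y \<in> nbhd (Suc r) G (f x)"
proof -
  have "walk G (P {x, y})" "length (P {x, y}) \<le> Suc (Suc r)"
    "{hd (P {x, y}), last (P {x, y})} = {f x, f y}"
    using assms unfolding shallow_subdivision_def gpath_def by auto
  then show ?thesis by (rule walk_in_nbhd)
qed

lemma shallow_subdivision_degree_le:
  assumes "graph H" "graph G" and sub: "shallow_subdivision r H G f P"
  shows "degree H x \<le> degree G (f x)"
proof -
  have "\<exists>b. adj G (f x) b \<and> (b = f y \<or> b \<in> internal (P {x, y}))" if "adj H x y" for y
  proof -
    have e: "{x, y} \<in> edges H" using that unfolding adj_def .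
    then have p: "gpath G (P {x, y})" "2 \<le> length (P {x, y})"
      "{hd (P {x, y}), last (P {x, y})} = {f x, f y}"
      using shallow_subdivisionD(3,4,6)[OF sub] by auto
    then obtain b where "b \<in> set (P {x, y}) - {f x}" "adj G (f x) b"
      using gpath_neighbour_of_end[of G "P {x, y}" "f x"] by auto
    moreover have "set (P {x, y}) \<subseteq> internal (P {x, y}) \<union> {f x, f y}"
      using p internal_eq[of "P {x, y}"] unfolding gpath_def by auto
    ultimately show ?thesis by auto
  qed
  then obtain nb where nb: "\<And>y. adj H x y \<Longrightarrow> adj G (f x) (nb y) \<and> (nb y = f y \<or> nb y \<in> internal (P {x, y}))"
    by metis
  have "inj_on nb {y. adj H x y}"
  proof (rule inj_onI, rule ccontr)
    fix y y' assume "y \<in> {y. adj H x y}" and "y' \<in> {y. adj H x y}" and eq: "nb y = nb y'" and "y \<noteq> y'"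
    then have y: "adj H x y" "adj H x y'" and e: "{x, y} \<in> edges H" "{x, y'} \<in> edges H"
      and ne: "{x, y} \<noteq> {x, y'}" and vs: "y \<in> verts H" "y' \<in> verts H"
      using adj_in_verts(2)[OF assms(1)] unfolding adj_def by (auto simp: doubleton_eq_iff)
    have "f y \<noteq> f y'" using shallow_subdivisionD(1)[OF sub] vs \<open>y \<noteq> y'\<close> by (auto dest: inj_onD)
    moreover have "internal (P {x, y}) \<inter> internal (P {x, y'}) = {}"
      using shallow_subdivisionD(8)[OF sub e ne] .
    moreover have "f y \<notin> internal (P {x, y'})" "f y' \<notin> internal (P {x, y})"
      using shallow_subdivisionD(7)[OF sub e(1)] shallow_subdivisionD(7)[OF sub e(2)] vs by auto
    ultimately show False using nb[OF y(1)] nb[OF y(2)] eq by auto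
  qed
  moreover have "nb ` {y. adj H x y} \<subseteq> {b. adj G (f x) b}" using nb by auto
  ultimately have "card {y. adj H x y} \<le> card {b. adj G (f x) b}"
    using finite_adj[OF assms(2)] by (intro card_inj_on_le)
  then show ?thesis using degree_eq_card_adj assms(1,2) by metis
qed

lemma verts_T: "xs \<in> verts (T d m) \<longleftrightarrow> length xs \<le> d \<and> set xs \<subseteq> {..<m}"
  unfolding T_def verts_def by simp

lemma edges_T:
  "e \<in> edges (T d m) \<longleftrightarrow> (\<exists>xs i. e = {xs, xs @ [i]} \<and> length xs < d \<and> set xs \<subseteq> {..<m} \<and> i < m)"
  unfolding T_def edges_def by auto

lemma graph_T: "graph (T d m)"
  unfolding graph_def
proof
  show "finite (verts (T d m))"
    using finite_lists_length_le[of "{..<m}" d] unfolding T_def verts_def by (simp add: conj_commute)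
  show "\<forall>e\<in>edges (T d m). e \<subseteq> verts (T d m) \<and> card e = 2"
  proof
    fix e assume "e \<in> edges (T d m)"
    then obtain xs i where "e = {xs, xs @ [i]}" "length xs < d" "set xs \<subseteq> {..<m}" "i < m"
      unfolding edges_T by blast
    then show "e \<subseteq> verts (T d m) \<and> card e = 2" by (auto simp: verts_T)
  qed
qed

lemma T_degree_ge:
  assumes "length xs < d" "set xs \<subseteq> {..<m}"
  shows "m \<le> degree (T d m) xs"
proof -
  have "(\<lambda>i. {xs, xs @ [i]}) ` {..<m} \<subseteq> {e \<in> edges (T d m). xs \<in> e}"
    using assms unfolding edges_T by blast
  moreover have "inj_on (\<lambda>i. {xs, xs @ [i]}) {..<m}"
    by (auto intro!: inj_onI simp: doubleton_eq_iff)
  ultimately have "card {..<m} \<le> card {e \<in> edges (T d m). xs \<in> e}"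
    using finite_edges[OF graph_T] by (intro card_inj_on_le) auto
  then show ?thesis unfolding degree_def by simp
qed

lemma edges_T_child:
  "e \<in> edges (T d m) \<longleftrightarrow> (\<exists>c\<in>verts (T d m). c \<noteq> [] \<and> e = {butlast c, c})"
proof
  assume "e \<in> edges (T d m)"
  then obtain xs i where "e = {xs, xs @ [i]}" "length xs < d" "set xs \<subseteq> {..<m}" "i < m"
    unfolding edges_T by blast
  then show "\<exists>c\<in>verts (T d m). c \<noteq> [] \<and> e = {butlast c, c}"
    by (intro bexI[of _ "xs @ [i]"]) (simp_all add: verts_T)
next
  assume "\<exists>c\<in>verts (T d m). c \<noteq> [] \<and> e = {butlast c, c}"
  then obtain c where c: "length c \<le> d" "set c \<subseteq> {..<m}" "c \<noteq> []" "e = {butlast c, c}"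
    by (auto simp: verts_T)
  then obtain xs i where xs: "c = xs @ [i]" by (cases c rule: rev_cases) auto
  then have "e = {xs, xs @ [i]}" "length xs < d" "set xs \<subseteq> {..<m}" "i < m"
    using c by auto
  then show "e \<in> edges (T d m)" unfolding edges_T by blast
qed

lemma the_child_in_edge:
  assumes "c \<noteq> []"
  shows "(THE c'. c' \<in> {butlast c, c} \<and> c' \<noteq> [] \<and> butlast c' \<in> {butlast c, c}) = c"
proof (rule the_equality)
  fix c' assume c': "c' \<in> {butlast c, c} \<and> c' \<noteq> [] \<and> butlast c' \<in> {butlast c, c}"
  show "c' = c"
  proof (rule ccontr)
    assume "c' \<noteq> c"
    then have "c' = butlast c" using c' by simp
    moreover have "length (butlast c) < length c" using assms by (cases c rule: rev_cases) auto
    ultimately have "butlast c' = c' \<or> butlast c' = c" "length c' < length c"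
      using c' by auto
    then have "length c' \<le> length (butlast c')" by (metis less_imp_le order_refl)
    moreover have "length (butlast c') < length c'" using c' by (cases c' rule: rev_cases) auto
    ultimately show False by linarith
  qed
qed (use assms in auto)

lemma shallow_top_minor_TI:
  fixes leg :: "nat list \<Rightarrow> 'a list"
  assumes "inj_on f (verts (T d m))" "f ` verts (T d m) \<subseteq> verts G"
    and legs: "\<And>c. c \<in> verts (T d m) \<Longrightarrow> c \<noteq> [] \<Longrightarrow>
      gpath G (leg c) \<and> 2 \<le> length (leg c) \<and> length (leg c) \<le> r + 2 \<and>
      hd (leg c) = f c \<and> last (leg c) = f (butlast c) \<and> internal (leg c) \<inter> f ` verts (T d m) = {}"
    and disjoint: "\<And>c c'. c \<in> verts (T d m) \<Longrightarrow> c' \<in> verts (T d m) \<Longrightarrow> c \<noteq> [] \<Longrightarrow> c' \<noteq> [] \<Longrightarrow>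
      c \<noteq> c' \<Longrightarrow> internal (leg c) \<inter> internal (leg c') = {}"
  shows "shallow_top_minor r (T d m) G"
proof -
  define P where "P e = leg (THE c. c \<in> e \<and> c \<noteq> [] \<and> butlast c \<in> e)" for e
  have P: "P {butlast c, c} = leg c" if "c \<noteq> []" for c
    unfolding P_def using the_child_in_edge[OF that] by simp
  have "\<forall>e\<in>edges (T d m). gpath G (P e) \<and> 2 \<le> length (P e) \<and> length (P e) \<le> r + 2 \<and>
      {hd (P e), last (P e)} = f ` e \<and> internal (P e) \<inter> f ` verts (T d m) = {}"
  proof
    fix e assume "e \<in> edges (T d m)"
    then obtain c where c: "c \<in> verts (T d m)" "c \<noteq> []" "e = {butlast c, c}"
      unfolding edges_T_child by blast
    then show "gpath G (P e) \<and> 2 \<le> length (P e) \<and> length (P e) \<le> r + 2 \<and>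
        {hd (P e), last (P e)} = f ` e \<and> internal (P e) \<inter> f ` verts (T d m) = {}"
      using legs[OF c(1,2)] P[OF c(2)] by (simp add: insert_commute)
  qed
  moreover have "\<forall>e\<in>edges (T d m). \<forall>e'\<in>edges (T d m). e \<noteq> e' \<longrightarrow> internal (P e) \<inter> internal (P e') = {}"
  proof (intro ballI impI)
    fix e e' assume "e \<in> edges (T d m)" "e' \<in> edges (T d m)" "e \<noteq> e'"
    then obtain c c' where c: "c \<in> verts (T d m)" "c \<noteq> []" "e = {butlast c, c}"
      and c': "c' \<in> verts (T d m)" "c' \<noteq> []" "e' = {butlast c', c'}"
      unfolding edges_T_child by blast
    then have "c \<noteq> c'" using \<open>e \<noteq> e'\<close> by blast
    then show "internal (P e) \<inter> internal (P e') = {}"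
      using disjoint[OF c(1) c'(1) c(2) c'(2)] P[OF c(2)] P[OF c'(2)] c(3) c'(3) by simp
  qed
  ultimately have "shallow_subdivision r (T d m) G f P"
    unfolding shallow_subdivision_def using assms(1,2) by simp
  then show ?thesis using shallow_top_minor_iff by blast
qed

lemma verts_T2: "c \<in> verts (T 2 m) \<longleftrightarrow> c = [] \<or> (\<exists>i<m. c = [i]) \<or> (\<exists>i<m. \<exists>j<m. c = [i, j])"
proof
  assume "c \<in> verts (T 2 m)"
  then have "length c \<le> 2" "set c \<subseteq> {..<m}" by (simp_all add: verts_T)
  then show "c = [] \<or> (\<exists>i<m. c = [i]) \<or> (\<exists>i<m. \<exists>j<m. c = [i, j])"
    by (cases c rule: list.exhaust[case_product list.exhaust[of "tl c"]]) auto
qed (auto simp: verts_T)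

locale T2_spider =
  fixes G :: "'a graph" and w :: 'a and M r :: nat
    and R :: "nat \<Rightarrow> 'a list" and L :: "nat \<times> nat \<Rightarrow> 'a"
  assumes graph: "graph G" and centre: "w \<in> verts G"
    and legs: "\<And>i. i < M \<Longrightarrow> gpath G (R i) \<and> 2 \<le> length (R i) \<and> length (R i) \<le> r + 2 \<and> last (R i) = w"
    and legs_meet: "\<And>i j. i < M \<Longrightarrow> j < M \<Longrightarrow> i \<noteq> j \<Longrightarrow> set (R i) \<inter> set (R j) \<subseteq> {w}"
    and feet: "\<And>i j. i < M \<Longrightarrow> j < M \<Longrightarrow> adj G (hd (R i)) (L (i, j))"
    and feet_off_legs: "\<And>i j k. i < M \<Longrightarrow> j < M \<Longrightarrow> k < M \<Longrightarrow> L (i, j) \<notin> set (R k)"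
    and feet_inj: "inj_on L ({..<M} \<times> {..<M})"
begin

definition branch :: "nat list \<Rightarrow> 'a" where
  "branch c = (case c of [] \<Rightarrow> w | [i] \<Rightarrow> hd (R i) | i # j # _ \<Rightarrow> L (i, j))"

definition leg :: "nat list \<Rightarrow> 'a list" where
  "leg c = (case c of [] \<Rightarrow> [] | [i] \<Rightarrow> R i | i # j # _ \<Rightarrow> [L (i, j), hd (R i)])"

lemma leg_ends:
  assumes "i < M"
  shows "hd (R i) \<in> set (R i)" "w \<in> set (R i)" "hd (R i) \<noteq> w"
proof -
  have "R i \<noteq> []" "distinct (R i)" "2 \<le> length (R i)" "last (R i) = w"
    using legs[OF assms] unfolding gpath_def walk_def by auto
  then show "hd (R i) \<in> set (R i)" "w \<in> set (R i)" "hd (R i) \<noteq> w"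
    using distinct_hd_neq_last[of "R i"] by auto
qed

lemma inj_on_hd_legs: "inj_on (\<lambda>i. hd (R i)) {..<M}"
proof (rule inj_onI, rule ccontr)
  fix i j assume i: "i \<in> {..<M}" and j: "j \<in> {..<M}" and eq: "hd (R i) = hd (R j)" and "i \<noteq> j"
  then have "hd (R i) \<in> set (R i) \<inter> set (R j)" using leg_ends(1)[of i] leg_ends(1)[of j] by auto
  then have "hd (R i) = w" using legs_meet i j \<open>i \<noteq> j\<close> by auto
  then show False using leg_ends(3) i by simp
qed

lemma internal_leg: "i < M \<Longrightarrow> internal (R i) = set (R i) - {hd (R i), w}"
  using legs internal_eq[of "R i"] unfolding gpath_def by simp

lemma feet_ne_centre: "i < M \<Longrightarrow> j < M \<Longrightarrow> L (i, j) \<noteq> w"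
  using feet_off_legs leg_ends(2) by metis

lemma feet_ne_hd_legs: "i < M \<Longrightarrow> j < M \<Longrightarrow> k < M \<Longrightarrow> L (i, j) \<noteq> hd (R k)"
  using feet_off_legs leg_ends(1) by metis

lemma inj_on_branch: "inj_on branch (verts (T 2 M))"
proof (rule inj_onI)
  fix c c' assume "c \<in> verts (T 2 M)" "c' \<in> verts (T 2 M)" and eq: "branch c = branch c'"
  then show "c = c'"
    unfolding verts_T2
  proof (elim disjE exE conjE)
  qed (use eq in \<open>simp_all add: branch_def leg_ends(3) feet_ne_centre feet_ne_hd_legs
      not_sym[OF leg_ends(3)] not_sym[OF feet_ne_centre] not_sym[OF feet_ne_hd_legs]
      inj_on_eq_iff[OF inj_on_hd_legs] inj_on_eq_iff[OF feet_inj]\<close>)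
qed

lemma branch_in_verts: "branch ` verts (T 2 M) \<subseteq> verts G"
proof -
  have hd_in_verts: "hd (R i) \<in> verts G" if "i < M" for i
    using legs[OF that] leg_ends(1)[OF that] unfolding gpath_def walk_def by auto
  show ?thesis
  proof
    fix x assume "x \<in> branch ` verts (T 2 M)"
    then obtain c where "c \<in> verts (T 2 M)" "x = branch c" by blast
    then show "x \<in> verts G"
      unfolding verts_T2 using centre adj_in_verts(2)[OF graph feet] hd_in_verts by (auto simp: branch_def)
  qed
qed

lemma internal_child_leg_disjoint:
  assumes i: "i < M"
  shows "internal (leg [i]) \<inter> branch ` verts (T 2 M) = {}"
proof -
  have "branch c \<notin> internal (R i)" if "c \<in> verts (T 2 M)" for c
    using that unfolding verts_T2
  proof (elim disjE exE conjE)
    fix j assume j: "j < M" and c: "c = [j]"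
    show "branch c \<notin> internal (R i)"
    proof (cases "j = i")
      case False
      then have "hd (R j) \<notin> set (R i)" using legs_meet[OF i j] leg_ends[OF j] by blast
      then show ?thesis using c internal_leg[OF i] by (simp add: branch_def)
    qed (use c internal_leg[OF i] in \<open>simp add: branch_def\<close>)
  qed (use internal_leg[OF i] feet_off_legs i in \<open>auto simp: branch_def\<close>)
  then show ?thesis by (auto simp: leg_def)
qed

lemma leg_path:
  assumes "c \<in> verts (T 2 M)" "c \<noteq> []"
  shows "gpath G (leg c) \<and> 2 \<le> length (leg c) \<and> length (leg c) \<le> r + 2 \<and>
    hd (leg c) = branch c \<and> last (leg c) = branch (butlast c) \<and>
    internal (leg c) \<inter> branch ` verts (T 2 M) = {}"
  using assms unfolding verts_T2
proof (elim disjE exE conjE)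
  fix i assume i: "i < M" and c: "c = [i]"
  then show ?thesis using legs[OF i] internal_child_leg_disjoint[OF i] by (auto simp: branch_def leg_def)
next
  fix i j assume i: "i < M" and j: "j < M" and c: "c = [i, j]"
  have "walk G [L (i, j), hd (R i)]"
    using feet[OF i j] adj_in_verts[OF graph feet[OF i j]] unfolding walk_def
    by (auto simp: adj_commute less_Suc_eq)
  then have "gpath G [L (i, j), hd (R i)]" using feet_ne_hd_legs[OF i j i] unfolding gpath_def by simp
  then show ?thesis using c by (simp add: branch_def leg_def internal_def)
qed simp

lemma legs_internally_disjoint:
  assumes "c \<in> verts (T 2 M)" "c' \<in> verts (T 2 M)" "c \<noteq> []" "c' \<noteq> []" "c \<noteq> c'"
  shows "internal (leg c) \<inter> internal (leg c') = {}"
proof -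
  have "internal [a, b] = {}" for a b :: 'a by (simp add: internal_def)
  moreover have "internal (R i) \<inter> internal (R j) = {}" if "i < M" "j < M" "i \<noteq> j" for i j
    using legs_meet[OF that] internal_leg that by blast
  ultimately show ?thesis using assms unfolding verts_T2 by (auto simp: leg_def) blast
qed

theorem shallow_top_minor: "shallow_top_minor r (T 2 M) G"
  using inj_on_branch branch_in_verts leg_path legs_internally_disjoint
  by (rule shallow_top_minor_TI[where f = branch and leg = leg])

end

lemma injective_choice:
  assumes "\<And>i. i < k \<Longrightarrow> finite (A i)" "\<And>i. i < k \<Longrightarrow> k * m \<le> card (A i)"
  shows "\<exists>L. inj_on L ({..<k} \<times> {..<m}) \<and> (\<forall>i<k. \<forall>j<m. L (i, j) \<in> A i)"
  using assms
proof (induction k)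
  case 0
  show ?case by simp
next
  case (Suc k)
  have "finite (A i)" "k * m \<le> card (A i)" if "i < k" for i
    using Suc.prems[of i] that by (simp_all add: le_trans)
  then obtain L where L: "inj_on L ({..<k} \<times> {..<m})" "\<forall>i<k. \<forall>j<m. L (i, j) \<in> A i"
    using Suc.IH by blast
  define used where "used = L ` ({..<k} \<times> {..<m})"
  have "card used \<le> k * m"
    unfolding used_def using card_image_le[of "{..<k} \<times> {..<m}" L] by simp
  moreover have "card (A k) - card used \<le> card (A k - used)"
    unfolding used_def by (rule diff_card_le_card_Diff) simp
  ultimately have "m \<le> card (A k - used)" using Suc.prems(2)[of k] by simp
  then obtain B where B: "B \<subseteq> A k - used" "card B = m" "finite B"
    by (rule obtain_subset_with_card_n)
  then obtain g where g: "bij_betw g {..<m} B"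
    using finite_same_card_bij[of "{..<m}" B] by auto
  define L' where "L' = (\<lambda>(i, j). if i = k then g j else L (i, j))"
  have split: "{..<Suc k} \<times> {..<m} = ({..<k} \<times> {..<m}) \<union> ({k} \<times> {..<m})" by auto
  have "inj_on L' ({..<k} \<times> {..<m})" using L(1) unfolding L'_def inj_on_def by auto
  moreover have "inj_on L' ({k} \<times> {..<m})"
    using g unfolding L'_def bij_betw_def inj_on_def by auto
  moreover have "L' ` ({..<k} \<times> {..<m}) = used" "L' ` ({k} \<times> {..<m}) = B"
    using g unfolding L'_def used_def bij_betw_def by (force simp: image_iff)+
  ultimately have "inj_on L' ({..<Suc k} \<times> {..<m})"
    unfolding split inj_on_Un using B(1) by blast
  moreover have "\<forall>i<Suc k. \<forall>j<m. L' (i, j) \<in> A i"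
    using L(2) B(1) g unfolding L'_def bij_betw_def by (auto simp: less_Suc_eq)
  ultimately show ?case by blast
qed

lemma shallow_top_minor_if_heavy_legs:
  assumes G: "graph G" and w: "w \<in> verts G"
    and legs: "\<And>i. i < M \<Longrightarrow> gpath G (R i) \<and> 2 \<le> length (R i) \<and> length (R i) \<le> r + 1 \<and> last (R i) = w"
    and legs_meet: "\<And>i j. i < M \<Longrightarrow> j < M \<Longrightarrow> i \<noteq> j \<Longrightarrow> set (R i) \<inter> set (R j) \<subseteq> {w}"
    and heavy: "\<And>i. i < M \<Longrightarrow> M * (M + r + 1) < degree G (hd (R i))"
  shows "shallow_top_minor r (T 2 M) G"
proof -
  define P where "P = (\<Union>i<M. set (R i))"
  have "card P \<le> (\<Sum>i<M. card (set (R i)))" unfolding P_def by (rule card_UN_le) simp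
  also have "\<dots> \<le> (\<Sum>i<M. r + 1)"
    using legs card_length[of "R _"] by (intro sum_mono) (meson le_trans lessThan_iff)
  finally have card_P: "card P \<le> M * (r + 1)" by simp
  define A where "A i = {y. adj G (hd (R i)) y} - P" for i
  have "finite (A i)" for i using finite_adj[OF G] unfolding A_def by simp
  moreover have "M * M \<le> card (A i)" if "i < M" for i
  proof -
    have "M * (M + r + 1) < card {y. adj G (hd (R i)) y}"
      using heavy[OF that] degree_eq_card_adj[OF G] by simp
    moreover have "card {y. adj G (hd (R i)) y} - card P \<le> card (A i)"
      unfolding A_def P_def by (rule diff_card_le_card_Diff) simp
    ultimately show ?thesis using card_P by (simp add: algebra_simps)
  qed
  ultimately obtain L where L: "inj_on L ({..<M} \<times> {..<M})" "\<And>i j. i < M \<Longrightarrow> j < M \<Longrightarrow> L (i, j) \<in> A i"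
    using injective_choice[of M A M] by blast
  have "T2_spider G w M r R L"
  proof
    show "gpath G (R i) \<and> 2 \<le> length (R i) \<and> length (R i) \<le> r + 2 \<and> last (R i) = w"
      if "i < M" for i using legs[OF that] by simp
    show "adj G (hd (R i)) (L (i, j))" if "i < M" "j < M" for i j
      using L(2)[OF that] unfolding A_def by simp
    show "L (i, j) \<notin> set (R k)" if "i < M" "j < M" "k < M" for i j k
      using L(2)[OF that(1,2)] that(3) unfolding A_def P_def by blast
  qed (use G w legs_meet L(1) in auto)
  then show ?thesis by (rule T2_spider.shallow_top_minor)
qed

lemma many_high_degree_if_T2_minor:
  assumes "graph G" "shallow_top_minor r (T 2 m) G"
  shows "\<exists>v\<in>verts G. m \<le> card {u \<in> nbhd (Suc r) G v. m \<le> degree G u}"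
proof -
  obtain f P where sub: "shallow_subdivision r (T 2 m) G f P"
    using assms(2) shallow_top_minor_iff by blast
  have root: "f [] \<in> verts G" using shallow_subdivisionD(2)[OF sub] by (auto simp: verts_T)
  have leaf: "[i] \<in> verts (T 2 m)" if "i < m" for i using that by (simp add: verts_T)
  have "f [i] \<in> {u \<in> nbhd (Suc r) G (f []). m \<le> degree G u}" if "i < m" for i
  proof -
    have "{[], [] @ [i]} \<in> edges (T 2 m)" unfolding edges_T using that by (intro exI[of _ "[]"] exI[of _ i]) simp
    then have "f [i] \<in> nbhd (Suc r) G (f [])" using shallow_subdivision_nbhd[OF sub] by simp
    moreover have "m \<le> degree (T 2 m) [i]" using that by (intro T_degree_ge) auto
    then have "m \<le> degree G (f [i])"
      using shallow_subdivision_degree_le[OF graph_T assms(1) sub] by (rule le_trans)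
    ultimately show ?thesis by simp
  qed
  moreover have "inj_on (\<lambda>i. f [i]) {..<m}"
    using inj_onD[OF shallow_subdivisionD(1)[OF sub]] leaf by (intro inj_onI) fastforce
  ultimately have "card {..<m} \<le> card {u \<in> nbhd (Suc r) G (f []). m \<le> degree G u}"
    using finite_nbhd[OF assms(1)] by (intro card_inj_on_le) auto
  then show ?thesis using root by auto
qed

lemma no_T2_minor_if_few_high_degree:
  assumes "graph G" and few: "\<And>v. v \<in> verts G \<Longrightarrow> card {u \<in> nbhd (Suc r) G v. d < degree G u} \<le> f"
  shows "\<not> shallow_top_minor r (T 2 (f + d + 1)) G"
proof
  assume "shallow_top_minor r (T 2 (f + d + 1)) G"
  then obtain v where "v \<in> verts G"
    and "f + d + 1 \<le> card {u \<in> nbhd (Suc r) G v. f + d + 1 \<le> degree G u}"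
    using many_high_degree_if_T2_minor[OF assms(1)] by blast
  moreover have "card {u \<in> nbhd (Suc r) G v. f + d + 1 \<le> degree G u} \<le> card {u \<in> nbhd (Suc r) G v. d < degree G u}"
    using finite_nbhd[OF assms(1), of "Suc r" v] by (intro card_mono) auto
  ultimately show False using few by fastforce
qed

section \<open>Breadth-first search trees\<close>

locale bfs_tree =
  fixes G :: "'a graph" and v :: 'a and r :: nat
  assumes graph: "graph G" and root: "v \<in> verts G"
begin

abbreviation U :: "'a set" where "U \<equiv> nbhd r G v"

definition depth :: "'a \<Rightarrow> nat" where
  "depth u = (LEAST n. u \<in> nbhd n G v)"

definition parent :: "'a \<Rightarrow> 'a" where
  "parent u = (if u = v then v else SOME p. p \<in> U \<and> adj G u p \<and> Suc (depth p) = depth u)"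

definition subtree :: "'a \<Rightarrow> 'a set" where
  "subtree w = {u \<in> U. depth w \<le> depth u \<and> (parent ^^ (depth u - depth w)) u = w}"

definition children :: "'a \<Rightarrow> 'a set" where
  "children w = {c \<in> U. c \<noteq> v \<and> parent c = w}"

lemma finite_U: "finite U"
  using finite_nbhd[OF graph] .

lemma in_nbhd_depth: "u \<in> U \<Longrightarrow> u \<in> nbhd (depth u) G v"
  unfolding depth_def by (rule LeastI)

lemma depth_le: "u \<in> nbhd n G v \<Longrightarrow> depth u \<le> n"
  unfolding depth_def by (rule Least_le)

lemma depth_root: "depth v = 0"
  using depth_le[OF center_in_nbhd[OF root, where n = 0]] by simp

lemma depth_eq_0_iff: "u \<in> U \<Longrightarrow> depth u = 0 \<longleftrightarrow> u = v"
  using in_nbhd_depth nbhd_0 depth_root by fastforce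

lemma parent_exists:
  assumes "u \<in> U" "u \<noteq> v"
  shows "\<exists>p. p \<in> U \<and> adj G u p \<and> Suc (depth p) = depth u"
proof -
  obtain n where n: "depth u = Suc n" using assms depth_eq_0_iff by (cases "depth u") auto
  then have "u \<in> nbhd (Suc n) G v" using in_nbhd_depth[OF assms(1)] by simp
  moreover have "u \<notin> nbhd n G v" using depth_le n by fastforce
  ultimately obtain p where p: "p \<in> nbhd n G v" "adj G p u" by (rule nbhd_SucE)
  have "depth u \<le> r" using depth_le[of u r] assms(1) by simp
  then have "p \<in> U" using p(1) nbhd_mono[of n r G v] n by auto
  have "u \<in> nbhd (Suc (depth p)) G v" using nbhd_Suc_adj[OF graph in_nbhd_depth[OF \<open>p \<in> U\<close>] p(2)] .
  then have "depth p = n" using depth_le[of u] depth_le[OF p(1)] n by fastforce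
  then show ?thesis using \<open>p \<in> U\<close> p(2) n adj_commute by metis
qed

lemma parent_props:
  assumes "u \<in> U" "u \<noteq> v"
  shows "parent u \<in> U \<and> adj G u (parent u) \<and> Suc (depth (parent u)) = depth u"
  using someI_ex[OF parent_exists[OF assms]] assms(2) unfolding parent_def by simp

lemma parent_in_U: "u \<in> U \<Longrightarrow> parent u \<in> U"
  using parent_props[of u] center_in_nbhd[OF root] unfolding parent_def by (cases "u = v") auto

lemma depth_parent: "u \<in> U \<Longrightarrow> depth (parent u) = depth u - 1"
  using parent_props[of u] depth_root unfolding parent_def by (cases "u = v") auto

lemma adj_parent: "u \<in> U \<Longrightarrow> u \<noteq> v \<Longrightarrow> adj G u (parent u)"
  using parent_props by blast

lemma funpow_parent:
  assumes "u \<in> U"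
  shows "(parent ^^ k) u \<in> U" "depth ((parent ^^ k) u) = depth u - k"
  using assms by (induction k) (auto simp: parent_in_U depth_parent)

lemma subtree_subset: "subtree w \<subseteq> U"
  unfolding subtree_def by auto

lemma funpow_parent_depth: "u \<in> U \<Longrightarrow> (parent ^^ depth u) u = v"
  using funpow_parent[of u "depth u"] depth_eq_0_iff by simp

lemma subtree_root: "subtree v = U"
  using funpow_parent_depth depth_root unfolding subtree_def by auto

lemma depth_children: "c \<in> children w \<Longrightarrow> depth c = Suc (depth w)"
  unfolding children_def using depth_parent depth_eq_0_iff by fastforce

lemma subtrees_disjoint: "depth c = depth c' \<Longrightarrow> c \<noteq> c' \<Longrightarrow> subtree c \<inter> subtree c' = {}"
  unfolding subtree_def by auto

lemma subtree_split: "subtree w \<subseteq> insert w (\<Union>c \<in> children w. subtree c)"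
proof
  fix u assume u: "u \<in> subtree w"
  show "u \<in> insert w (\<Union>c \<in> children w. subtree c)"
  proof (cases "u = w")
    case False
    with u have "depth w < depth u" "u \<in> U" "(parent ^^ (depth u - depth w)) u = w"
      unfolding subtree_def by (auto simp: le_less)
    moreover define c where "c = (parent ^^ (depth u - Suc (depth w))) u"
    moreover have "Suc (depth u - Suc (depth w)) = depth u - depth w" using \<open>depth w < depth u\<close> by simp
    moreover have "parent c = (parent ^^ Suc (depth u - Suc (depth w))) u" unfolding c_def by simp
    ultimately have "c \<in> U" "depth c = Suc (depth w)" "parent c = w"
      using funpow_parent[of u] unfolding c_def by auto
    then have "c \<in> children w" "u \<in> subtree c"
      using depth_root \<open>u \<in> U\<close> \<open>depth w < depth u\<close> unfolding children_def subtree_def c_def by auto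
    then show ?thesis by blast
  qed simp
qed

lemma card_marked_subtree_le:
  assumes few: "\<forall>w\<in>U. card {c \<in> children w. subtree c \<inter> S \<noteq> {}} \<le> M"
  shows "w \<in> U \<Longrightarrow> r \<le> depth w + h \<Longrightarrow> card (subtree w \<inter> S) \<le> (M + 1) ^ h"
proof (induction h arbitrary: w)
  case 0
  have "children w = {}"
  proof (rule ccontr)
    assume "children w \<noteq> {}"
    then obtain c where "c \<in> U" "depth c = Suc (depth w)"
      using depth_children unfolding children_def by blast
    then show False using depth_le[of c r] 0(2) by simp
  qed
  then have "subtree w \<inter> S \<subseteq> {w}" using subtree_split[of w] by auto
  then show ?case using card_mono[of "{w}"] by simp
next
  case (Suc h)
  define C where "C = {c \<in> children w. subtree c \<inter> S \<noteq> {}}"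
  have C: "finite C" "card C \<le> M" "C \<subseteq> children w"
    using few Suc.prems(1) finite_subset[OF _ finite_U] unfolding C_def children_def by auto
  have "card (subtree c \<inter> S) \<le> (M + 1) ^ h" if "c \<in> C" for c
  proof (rule Suc.IH)
    show "c \<in> U" "r \<le> depth c + h"
      using that C(3) depth_children[of c w] Suc.prems(2) unfolding children_def by auto
  qed
  then have "(\<Sum>c\<in>C. card (subtree c \<inter> S)) \<le> card C * (M + 1) ^ h"
    using sum_bounded_above[of C "\<lambda>c. card (subtree c \<inter> S)"] by simp
  moreover have "card (\<Union>c\<in>C. subtree c \<inter> S) \<le> (\<Sum>c\<in>C. card (subtree c \<inter> S))"
    using C(1) by (rule card_UN_le)
  ultimately have union: "card (\<Union>c\<in>C. subtree c \<inter> S) \<le> M * (M + 1) ^ h"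
    using C(2) by (meson le_trans mult_le_mono1)
  have fin: "finite (\<Union>c\<in>C. subtree c \<inter> S)"
    using C(1) finite_subset[OF subtree_subset finite_U] by blast
  have "subtree w \<inter> S \<subseteq> insert w (\<Union>c\<in>C. subtree c \<inter> S)"
    using subtree_split[of w] unfolding C_def by blast
  then have "card (subtree w \<inter> S) \<le> card (insert w (\<Union>c\<in>C. subtree c \<inter> S))"
    using fin by (intro card_mono) simp_all
  also have "\<dots> \<le> Suc (card (\<Union>c\<in>C. subtree c \<inter> S))"
    using fin by (simp add: card_insert_if)
  finally have "card (subtree w \<inter> S) \<le> Suc (M * (M + 1) ^ h)" using union by simp
  moreover have "Suc (M * (M + 1) ^ h) \<le> (M + 1) ^ Suc h" by (simp add: Suc_le_eq)
  ultimately show ?case by (rule le_trans)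
qed

lemma many_marked_children:
  assumes "S \<subseteq> U" "(M + 1) ^ r < card S"
  obtains w where "w \<in> U" "M < card {c \<in> children w. subtree c \<inter> S \<noteq> {}}"
proof -
  have "\<not> (\<forall>w\<in>U. card {c \<in> children w. subtree c \<inter> S \<noteq> {}} \<le> M)"
  proof
    assume "\<forall>w\<in>U. card {c \<in> children w. subtree c \<inter> S \<noteq> {}} \<le> M"
    then have "card (subtree v \<inter> S) \<le> (M + 1) ^ r"
      using card_marked_subtree_le center_in_nbhd[OF root] by simp
    then show False using assms subtree_root by (simp add: Int_absorb1)
  qed
  then show thesis using that by (auto simp: not_le)
qed

definition ancestors :: "'a \<Rightarrow> nat \<Rightarrow> 'a list" where
  "ancestors u k = map (\<lambda>j. (parent ^^ j) u) [0..<Suc k]"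

lemma length_ancestors [simp]: "length (ancestors u k) = Suc k"
  and hd_ancestors [simp]: "hd (ancestors u k) = u"
  and last_ancestors [simp]: "last (ancestors u k) = (parent ^^ k) u"
  unfolding ancestors_def by (simp_all add: hd_map last_map del: upt_Suc)

lemma set_ancestors: "set (ancestors u k) = (\<lambda>j. (parent ^^ j) u) ` {..k}"
  unfolding ancestors_def by (simp add: atLeast0LessThan lessThan_Suc_atMost del: upt_Suc)

lemma gpath_ancestors:
  assumes "u \<in> U" "k \<le> depth u"
  shows "gpath G (ancestors u k)"
proof -
  have "adj G ((parent ^^ j) u) ((parent ^^ Suc j) u)" if "j < k" for j
  proof -
    have "(parent ^^ j) u \<in> U" "(parent ^^ j) u \<noteq> v"
      using funpow_parent[OF assms(1), of j] depth_root that assms(2) by auto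
    then show ?thesis using adj_parent by simp
  qed
  moreover have "set (ancestors u k) \<subseteq> verts G"
    using funpow_parent(1)[OF assms(1)] nbhd_subset_verts[of r G v] unfolding set_ancestors by blast
  moreover have "inj_on (\<lambda>j. (parent ^^ j) u) {0..<Suc k}"
    using funpow_parent(2)[OF assms(1)] assms(2)
    by (intro inj_onI) (metis atLeastLessThan_iff diff_diff_cancel le_trans less_Suc_eq_le)
  ultimately show ?thesis
    unfolding gpath_def walk_def ancestors_def by (auto simp: distinct_map simp del: upt_Suc)
qed

lemma funpow_parent_in_subtree:
  assumes "u \<in> subtree c" "j \<le> depth u - depth c"
  shows "(parent ^^ j) u \<in> subtree c"
proof -
  have u: "u \<in> U" "depth c \<le> depth u" "(parent ^^ (depth u - depth c)) u = c"
    using assms(1) unfolding subtree_def by auto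
  have "depth u - j - depth c + j = depth u - depth c" using assms(2) u(2) by simp
  then have "(parent ^^ (depth u - j - depth c)) ((parent ^^ j) u) = (parent ^^ (depth u - depth c)) u"
    by (metis comp_apply funpow_add)
  then show ?thesis
    using u funpow_parent[OF u(1), of j] assms(2) unfolding subtree_def by auto
qed

lemma path_to_parent:
  assumes c: "c \<in> children w" and u: "u \<in> subtree c"
  shows "depth w < depth u"
    and "gpath G (ancestors u (depth u - depth w))"
    and "last (ancestors u (depth u - depth w)) = w"
    and "set (ancestors u (depth u - depth w)) \<subseteq> insert w (subtree c)"
proof -
  have dc: "depth c = Suc (depth w)" using depth_children[OF c] .
  have uU: "u \<in> U" "depth c \<le> depth u" "(parent ^^ (depth u - depth c)) u = c"
    using u unfolding subtree_def by auto
  show "depth w < depth u" using dc uU(2) by simp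
  then have k: "depth u - depth w = Suc (depth u - depth c)" using dc by simp
  show "gpath G (ancestors u (depth u - depth w))" using gpath_ancestors[OF uU(1)] by simp
  have "(parent ^^ (depth u - depth w)) u = w"
    using k uU(3) c unfolding children_def by simp
  then show "last (ancestors u (depth u - depth w)) = w" by simp
  show "set (ancestors u (depth u - depth w)) \<subseteq> insert w (subtree c)"
  proof
    fix x assume "x \<in> set (ancestors u (depth u - depth w))"
    then obtain j where "j \<le> depth u - depth w" "x = (parent ^^ j) u"
      unfolding set_ancestors by auto
    then show "x \<in> insert w (subtree c)"
      using funpow_parent_in_subtree[OF u, of j] \<open>(parent ^^ (depth u - depth w)) u = w\<close> k
      by (cases "j = depth u - depth w") auto
  qed
qed

lemma legs_from_branching:
  assumes "M \<le> card {c \<in> children w. subtree c \<inter> S \<noteq> {}}"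
  obtains R where "\<And>i. i < M \<Longrightarrow>
      gpath G (R i) \<and> 2 \<le> length (R i) \<and> length (R i) \<le> r + 1 \<and> last (R i) = w \<and> hd (R i) \<in> S"
    and "\<And>i j. i < M \<Longrightarrow> j < M \<Longrightarrow> i \<noteq> j \<Longrightarrow> set (R i) \<inter> set (R j) \<subseteq> {w}"
proof -
  obtain C where C: "C \<subseteq> {c \<in> children w. subtree c \<inter> S \<noteq> {}}" "card C = M" "finite C"
    using assms by (rule obtain_subset_with_card_n)
  then obtain c where c: "bij_betw c {..<M} C"
    using finite_same_card_bij[of "{..<M}" C] by auto
  then have c_child: "c i \<in> children w" "subtree (c i) \<inter> S \<noteq> {}" if "i < M" for i
    using C(1) that bij_betwE by blast+
  have "\<forall>i. \<exists>x. i < M \<longrightarrow> x \<in> subtree (c i) \<inter> S" using c_child(2) by blast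
  then obtain s where s: "\<And>i. i < M \<Longrightarrow> s i \<in> subtree (c i) \<inter> S" by metis
  define R where "R i = ancestors (s i) (depth (s i) - depth w)" for i
  have R: "depth w < depth (s i)" "gpath G (R i)" "last (R i) = w" "set (R i) \<subseteq> insert w (subtree (c i))"
    if "i < M" for i
    using path_to_parent[OF c_child(1)[OF that], of "s i"] s[OF that] unfolding R_def by auto
  have len_R: "2 \<le> length (R i)" "length (R i) \<le> r + 1" if "i < M" for i
    using R(1)[OF that] depth_le[of "s i" r] s[OF that] subtree_subset[of "c i"] unfolding R_def by auto
  have meet: "set (R i) \<inter> set (R j) \<subseteq> {w}" if "i < M" "j < M" "i \<noteq> j" for i j
  proof -
    have "c i \<noteq> c j" using c that unfolding bij_betw_def inj_on_def by blast
    moreover have "depth (c i) = depth (c j)"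
      using depth_children[OF c_child(1)[OF that(1)]] depth_children[OF c_child(1)[OF that(2)]] by simp
    ultimately have "subtree (c i) \<inter> subtree (c j) = {}" by (rule subtrees_disjoint[rotated])
    then show ?thesis using R(4)[OF that(1)] R(4)[OF that(2)] by blast
  qed
  show thesis
  proof (rule that)
    show "gpath G (R i) \<and> 2 \<le> length (R i) \<and> length (R i) \<le> r + 1 \<and> last (R i) = w \<and> hd (R i) \<in> S"
      if "i < M" for i using R(2,3)[OF that] len_R[OF that] s[OF that] by (simp add: R_def)
  qed (rule meet)
qed

end

lemma few_high_degree_if_no_T2_minor:
  assumes "graph G" "v \<in> verts G" "\<not> shallow_top_minor r (T 2 M) G"
  shows "card {u \<in> nbhd r G v. M * (M + r + 1) < degree G u} \<le> (M + 1) ^ r"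
proof (rule ccontr)
  interpret bfs_tree G v r using assms(1,2) by unfold_locales
  define S where "S = {u \<in> U. M * (M + r + 1) < degree G u}"
  assume "\<not> ?thesis"
  then have "(M + 1) ^ r < card S" unfolding S_def by simp
  moreover have "S \<subseteq> U" unfolding S_def by blast
  ultimately obtain w where w: "w \<in> U" and branching: "M < card {c \<in> children w. subtree c \<inter> S \<noteq> {}}"
    using many_marked_children by blast
  obtain R where "\<And>i. i < M \<Longrightarrow>
      gpath G (R i) \<and> 2 \<le> length (R i) \<and> length (R i) \<le> r + 1 \<and> last (R i) = w \<and> hd (R i) \<in> S"
    and "\<And>i j. i < M \<Longrightarrow> j < M \<Longrightarrow> i \<noteq> j \<Longrightarrow> set (R i) \<inter> set (R j) \<subseteq> {w}"
    using legs_from_branching[OF less_imp_le[OF branching]] by blast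
  moreover have "w \<in> verts G" using w nbhd_subset_verts[of r G v] by blast
  ultimately have "shallow_top_minor r (T 2 M) G"
    using shallow_top_minor_if_heavy_legs[OF assms(1)] unfolding S_def by blast
  then show False using assms(3) by contradiction
qed

theorem lemma5p2:
  fixes C :: "'a graph set"
  assumes "\<forall>G\<in>C. graph G"
  shows "tree_rank_le 2 C \<longleftrightarrow> locally_almost_bounded_degree C"
proof
  assume "tree_rank_le 2 C"
  then obtain M where M: "\<And>r G. G \<in> C \<Longrightarrow> \<not> shallow_top_minor r (T 2 (M r)) G"
    unfolding tree_rank_le_def by metis
  show "locally_almost_bounded_degree C"
    unfolding locally_almost_bounded_degree_def
    using few_high_degree_if_no_T2_minor[OF _ _ M] assms
    by (intro exI[of _ "\<lambda>r. (M r + 1) ^ r"] exI[of _ "\<lambda>r. M r * (M r + r + 1)"] allI ballI) simp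
next
  assume "locally_almost_bounded_degree C"
  then obtain f d where fd: "\<And>r G v. G \<in> C \<Longrightarrow> v \<in> verts G \<Longrightarrow>
      card {u \<in> nbhd r G v. d r < degree G u} \<le> f r"
    unfolding locally_almost_bounded_degree_def by blast
  show "tree_rank_le 2 C"
    unfolding tree_rank_le_def
  proof (intro allI exI ballI)
    fix r G assume "G \<in> C"
    then show "\<not> shallow_top_minor r (T 2 (f (Suc r) + d (Suc r) + 1)) G"
      using no_T2_minor_if_few_high_degree fd assms by blast
  qed
qed

end
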